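(* Let $\mathcal F|\mathcal G$ be a biflag of $M$, let $s$ be the number of distinct flats different from $E$ among the flats $F$ of the biflats $F|G\in\mathcal F|\mathcal G$, and let $k\ge0$. (1) If $s+k>r$, then $x_{\mathcal F|\mathcal G}\,\gamma^k=0$ in $A_{M,M^\perp}$. (2) If $s+k=r$ and $\mathcal F$ is not initial, then $x_{\mathcal F|\mathcal G}\,\gamma^k=0$ in $A_{M,M^\perp}$. Here $\mathcal F$ is initial if its $s$ distinct flats different from $E$ have ranks exactly $1,2,\dots,s$ in $M$.
   Context: Let $M$ be a matroid with no loops and no coloops on the ground set $E=\{0,1,\dots,n\}$, of rank $r+1$; $M^\perp$ its dual. A biflat of $M$ is a pair $F|G$ where $F$ is a flat of $M$, $G$ is a flat of $M^\perp$, both are nonempty, they are not both equal to $E$, and $F\cup G=E$. Two biflats $F|G$, $F'|G'$ are compatible if ($F\subseteq F'$ and $G\supseteq G'$) or ($F\supseteq F'$ and $G\subseteq G'$). A biflag is a set of pairwise compatible biflats with $\bigcup_{F|G}(F\cap G)\neq E$. Conormal Chow ring: $S$ is the polynomial ring over $\mathbb R$ in variables $x_{F|G}$, one per biflat; $x_{\mathcal F|\mathcal G}=\prod_{F|G\in\mathcal F|\mathcal G}x_{F|G}$ for a set of biflats. For $i\in E$, $\gamma_i=\sum_{i\in F,\,F\neq E}x_{F|G}$, $\bar\gamma_i=\sum_{i\in G,\,G\neq E}x_{F|G}$. $I$ is generated by the $x_{\mathcal F|\mathcal G}$ for sets of biflats that are not biflags, $J$ by all $\gamma_i-\gamma_j$,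 $\bar\gamma_i-\bar\gamma_j$; $A_{M,M^\perp}=S/(I+J)$, and $\gamma$ is the common class of the $\gamma_i$. *)

theory Defs
  imports Complex_Main "HOL-Library.Poly_Mapping"
begin

definition matroid :: "'a set \<Rightarrow> ('a set \<Rightarrow> bool) \<Rightarrow> bool" where
  "matroid E indep \<longleftrightarrow> finite E \<and> indep {} \<and>
     (\<forall>A. indep A \<longrightarrow> A \<subseteq> E) \<and>
     (\<forall>A B. indep A \<and> B \<subseteq> A \<longrightarrow> indep B) \<and>
     (\<forall>A B. indep A \<and> indep B \<and> card A < card B \<longrightarrow> (\<exists>e\<in>B - A. indep (insert e A)))"

definition mrank :: "('a set \<Rightarrow> bool) \<Rightarrow> 'a set \<Rightarrow> nat" where
  "mrank indep A = Max {card I | I. I \<subseteq> A \<and> indep I}"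

definition flat_of_rank :: "'a set \<Rightarrow> ('a set \<Rightarrow> nat) \<Rightarrow> 'a set \<Rightarrow> bool" where
  "flat_of_rank E rk A \<longleftrightarrow> A \<subseteq> E \<and> (\<forall>e\<in>E - A. rk (insert e A) > rk A)"

definition mflat :: "'a set \<Rightarrow> ('a set \<Rightarrow> bool) \<Rightarrow> 'a set \<Rightarrow> bool" where
  "mflat E indep A = flat_of_rank E (mrank indep) A"

definition dual_rank :: "'a set \<Rightarrow> ('a set \<Rightarrow> bool) \<Rightarrow> 'a set \<Rightarrow> nat" where
  "dual_rank E indep A = card A + mrank indep (E - A) - mrank indep E"

definition dual_flat :: "'a set \<Rightarrow> ('a set \<Rightarrow> bool) \<Rightarrow> 'a set \<Rightarrow> bool" where
  "dual_flat E indep A = flat_of_rank E (dual_rank E indep) A"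

definition no_loops :: "'a set \<Rightarrow> ('a set \<Rightarrow> bool) \<Rightarrow> bool" where
  "no_loops E indep \<longleftrightarrow> (\<forall>e\<in>E. indep {e})"

definition no_coloops :: "'a set \<Rightarrow> ('a set \<Rightarrow> bool) \<Rightarrow> bool" where
  "no_coloops E indep \<longleftrightarrow> (\<forall>e\<in>E. mrank indep (E - {e}) = mrank indep E)"

type_synonym 'a biflat = "'a set \<times> 'a set"

definition biflat :: "'a set \<Rightarrow> ('a set \<Rightarrow> bool) \<Rightarrow> 'a biflat \<Rightarrow> bool" where
  "biflat E indep FG \<longleftrightarrow> (case FG of (F, G) \<Rightarrow>
      mflat E indep F \<and> dual_flat E indep G \<and> F \<noteq> {} \<and> G \<noteq> {} \<and>
      \<not> (F = E \<and> G = E) \<and> F \<union> G = E)"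

definition compatible :: "'a biflat \<Rightarrow> 'a biflat \<Rightarrow> bool" where
  "compatible FG FG' \<longleftrightarrow> (case FG of (F, G) \<Rightarrow> case FG' of (F', G') \<Rightarrow>
      (F \<subseteq> F' \<and> G \<supseteq> G') \<or> (F \<supseteq> F' \<and> G \<subseteq> G'))"

definition biflag :: "'a set \<Rightarrow> ('a set \<Rightarrow> bool) \<Rightarrow> 'a biflat set \<Rightarrow> bool" where
  "biflag E indep S \<longleftrightarrow> (\<forall>b\<in>S. biflat E indep b) \<and>
      (\<forall>b\<in>S. \<forall>b'\<in>S. compatible b b') \<and>
      (\<Union>(F, G)\<in>S. F \<inter> G) \<noteq> E"

text \<open>Polynomials over the reals in variables indexed by biflats: finitely supported
  functions from monomials (finitely supported exponent vectors) to coefficients.\<close>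
type_synonym 'a cpoly = "('a biflat \<Rightarrow>\<^sub>0 nat) \<Rightarrow>\<^sub>0 real"

definition var :: "'a biflat \<Rightarrow> 'a cpoly" where
  "var b = Poly_Mapping.single (Poly_Mapping.single b 1) 1"

definition xmon :: "'a biflat set \<Rightarrow> 'a cpoly" where
  "xmon S = (\<Prod>b\<in>S. var b)"

definition ideal_gen :: "'b::comm_ring_1 set \<Rightarrow> 'b set" where
  "ideal_gen G = {p. \<exists>A c. finite A \<and> A \<subseteq> G \<and> p = (\<Sum>g\<in>A. c g * g)}"

definition biflats_of :: "'a set \<Rightarrow> ('a set \<Rightarrow> bool) \<Rightarrow> 'a biflat set" where
  "biflats_of E indep = {b. biflat E indep b}"

definition gamma :: "'a set \<Rightarrow> ('a set \<Rightarrow> bool) \<Rightarrow> 'a \<Rightarrow> 'a cpoly" where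
  "gamma E indep i = (\<Sum>(F, G)\<in>{(F, G). biflat E indep (F, G) \<and> i \<in> F \<and> F \<noteq> E}. var (F, G))"

definition gamma_bar :: "'a set \<Rightarrow> ('a set \<Rightarrow> bool) \<Rightarrow> 'a \<Rightarrow> 'a cpoly" where
  "gamma_bar E indep i = (\<Sum>(F, G)\<in>{(F, G). biflat E indep (F, G) \<and> i \<in> G \<and> G \<noteq> E}. var (F, G))"

definition chow_relations :: "'a set \<Rightarrow> ('a set \<Rightarrow> bool) \<Rightarrow> 'a cpoly set" where
  "chow_relations E indep =
     {xmon S | S. S \<subseteq> biflats_of E indep \<and> \<not> biflag E indep S} \<union>
     {gamma E indep i - gamma E indep j | i j. i \<in> E \<and> j \<in> E} \<union>
     {gamma_bar E indep i - gamma_bar E indep j | i j. i \<in> E \<and> j \<in> E}"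

text \<open>p = 0 in A_{M,M^perp} = S/(I+J).\<close>
definition zero_in_chow :: "'a set \<Rightarrow> ('a set \<Rightarrow> bool) \<Rightarrow> 'a cpoly \<Rightarrow> bool" where
  "zero_in_chow E indep p \<longleftrightarrow> p \<in> ideal_gen (chow_relations E indep)"

definition proper_flats :: "'a set \<Rightarrow> 'a biflat set \<Rightarrow> 'a set set" where
  "proper_flats E S = {F. \<exists>G. (F, G) \<in> S \<and> F \<noteq> E}"

definition initial :: "'a set \<Rightarrow> ('a set \<Rightarrow> bool) \<Rightarrow> 'a biflat set \<Rightarrow> bool" where
  "initial E indep S \<longleftrightarrow> mrank indep ` proper_flats E S = {1..card (proper_flats E S)}"

end

theory Submission
  imports Defs
begin

text \<open>The proper flats of a biflag form a chain of flats, so their ranks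
  are distinct and lie in \<open>1..r\<close>; this gives \<open>s \<le> r\<close>, with equality only for initial
  biflags, which is the case \<open>k = 0\<close>. For the step choose \<open>j\<close> outside the largest proper
  flat and write \<open>\<gamma> = \<gamma>\<^sub>j\<close>: then \<open>x\<^sub>S \<gamma>\<^sub>j\<close> is the sum of the monomials \<open>x\<^sub>S x\<^sub>F\<^sub>|\<^sub>G\<close> with
  \<open>j \<in> F \<noteq> E\<close>. Each of them either is not a biflag, hence vanishes, or is a biflag whose
  proper flats are those of \<open>S\<close> plus \<open>F\<close> on top of the chain, so \<open>s\<close> grows by one and
  non-initiality is preserved.\<close>

lemma ideal_gen_zero: "0 \<in> ideal_gen G"
  unfolding ideal_gen_def by (auto intro: exI[of _ "{}"])

lemma ideal_gen_generator: "g \<in> G \<Longrightarrow> g \<in> ideal_gen G"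
  unfolding ideal_gen_def by (intro CollectI exI[of _ "{g}"] exI[of _ "\<lambda>_. 1"]) auto

lemma ideal_gen_mult_left:
  assumes "p \<in> ideal_gen G"
  shows "q * p \<in> ideal_gen G"
proof -
  obtain A c where A: "finite A" "A \<subseteq> G" "p = (\<Sum>g\<in>A. c g * g)"
    using assms unfolding ideal_gen_def by blast
  have "q * p = (\<Sum>g\<in>A. (q * c g) * g)"
    unfolding A(3) sum_distrib_left by (rule sum.cong) (simp_all only: mult.assoc)
  then show ?thesis unfolding ideal_gen_def using A(1,2) by (intro CollectI exI conjI)
qed

lemma ideal_gen_add:
  assumes "p \<in> ideal_gen G" "q \<in> ideal_gen G"
  shows "p + q \<in> ideal_gen G"
proof -
  obtain A c B d where A: "finite A" "A \<subseteq> G" "p = (\<Sum>g\<in>A. c g * g)"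
    and B: "finite B" "B \<subseteq> G" "q = (\<Sum>g\<in>B. d g * g)"
    using assms unfolding ideal_gen_def by blast
  define e where "e g = (if g \<in> A then c g else 0) + (if g \<in> B then d g else 0)" for g
  have "(\<Sum>g\<in>A \<union> B. e g * g) = (\<Sum>g\<in>A \<union> B. if g \<in> A then c g * g else 0)
        + (\<Sum>g\<in>A \<union> B. if g \<in> B then d g * g else 0)"
    unfolding sum.distrib[symmetric] by (rule sum.cong) (auto simp: e_def distrib_right)
  also have "\<dots> = p + q"
    using A B by (simp add: sum.If_cases Int_absorb1)
  finally show ?thesis
    using A B unfolding ideal_gen_def by (intro CollectI exI[of _ "A \<union> B"] exI[of _ e]) auto
qed

lemma ideal_gen_sum: "finite I \<Longrightarrow> (\<And>i. i \<in> I \<Longrightarrow> f i \<in> ideal_gen G) \<Longrightarrow> sum f I \<in> ideal_gen G"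
  by (induction I rule: finite_induct) (auto intro: ideal_gen_zero ideal_gen_add)

lemma zero_in_chow_xmon_not_biflag:
  assumes "S \<subseteq> biflats_of E indep" "\<not> biflag E indep S"
  shows "zero_in_chow E indep (q * xmon S)"
  unfolding zero_in_chow_def chow_relations_def
  using assms by (intro ideal_gen_mult_left ideal_gen_generator) blast

lemma zero_in_chow_gamma_diff:
  assumes "i \<in> E" "j \<in> E"
  shows "zero_in_chow E indep (q * (gamma E indep i - gamma E indep j))"
  unfolding zero_in_chow_def chow_relations_def
  using assms by (intro ideal_gen_mult_left ideal_gen_generator) blast

lemma finite_card_independent_subsets:
  assumes "matroid E indep"
  shows "finite {card I | I. I \<subseteq> A \<and> indep I}"
proof -
  have "{card I | I. I \<subseteq> A \<and> indep I} \<subseteq> card ` Pow E"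
    using assms unfolding matroid_def by auto
  moreover have "finite E" using assms unfolding matroid_def by simp
  ultimately show ?thesis using finite_subset by blast
qed

lemma mrank_ge_card:
  assumes "matroid E indep" "I \<subseteq> A" "indep I"
  shows "card I \<le> mrank indep A"
  unfolding mrank_def using finite_card_independent_subsets[OF assms(1)] assms(2,3)
  by (intro Max_ge) auto

lemma mrank_mono:
  assumes "matroid E indep" "A \<subseteq> B"
  shows "mrank indep A \<le> mrank indep B"
  unfolding mrank_def
proof (rule Max_mono)
  show "{card I | I. I \<subseteq> A \<and> indep I} \<subseteq> {card I | I. I \<subseteq> B \<and> indep I}"
    using assms(2) by blast
  have "indep {}" using assms(1) unfolding matroid_def by simp
  then show "{card I | I. I \<subseteq> A \<and> indep I} \<noteq> {}" by blast
  show "finite {card I | I. I \<subseteq> B \<and> indep I}"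
    by (rule finite_card_independent_subsets[OF assms(1)])
qed

lemma mrank_flat_psubset:
  assumes "matroid E indep" "mflat E indep F" "F \<subset> F'" "F' \<subseteq> E"
  shows "mrank indep F < mrank indep F'"
proof -
  obtain e where e: "e \<in> F'" "e \<notin> F" using assms(3) by blast
  then have "mrank indep F < mrank indep (insert e F)"
    using assms(2,4) unfolding mflat_def flat_of_rank_def by blast
  also have "\<dots> \<le> mrank indep F'"
    using e assms(3) by (intro mrank_mono[OF assms(1)]) auto
  finally show ?thesis .
qed

lemma mrank_pos:
  assumes "matroid E indep" "no_loops E indep" "F \<subseteq> E" "F \<noteq> {}"
  shows "0 < mrank indep F"
proof -
  obtain e where "e \<in> F" using assms(4) by blast
  then have "card {e} \<le> mrank indep F"
    using assms(2,3) unfolding no_loops_def by (intro mrank_ge_card[OF assms(1)]) auto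
  then show ?thesis by simp
qed

lemma biflat_subset: "biflat E indep (F, G) \<Longrightarrow> F \<subseteq> E \<and> G \<subseteq> E"
  unfolding biflat_def mflat_def dual_flat_def flat_of_rank_def by auto

lemma finite_biflats:
  assumes "finite E"
  shows "finite {b. biflat E indep b}"
proof -
  have "{b. biflat E indep b} \<subseteq> Pow E \<times> Pow E" using biflat_subset by fastforce
  then show ?thesis using assms by (meson finite_Pow_iff finite_SigmaI finite_subset)
qed

lemma biflag_finite: "finite E \<Longrightarrow> biflag E indep S \<Longrightarrow> finite S"
  using finite_biflats[of E indep] unfolding biflag_def
  by (metis finite_subset mem_Collect_eq subsetI)

lemma finite_proper_flats: "finite S \<Longrightarrow> finite (proper_flats E S)"
  by (rule finite_subset[of _ "fst ` S"]) (force simp: proper_flats_def)+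

lemma proper_flats_chain:
  assumes "biflag E indep S" "F \<in> proper_flats E S" "F' \<in> proper_flats E S"
  shows "F \<subseteq> F' \<or> F' \<subseteq> F"
proof -
  obtain G G' where "(F, G) \<in> S" "(F', G') \<in> S"
    using assms(2,3) unfolding proper_flats_def by blast
  then have "compatible (F, G) (F', G')" using assms(1) unfolding biflag_def by blast
  then show ?thesis unfolding compatible_def by auto
qed

lemma proper_flat_props:
  assumes "biflag E indep S" "F \<in> proper_flats E S"
  shows "mflat E indep F" "F \<noteq> {}" "F \<subset> E"
proof -
  obtain G where "(F, G) \<in> S" "F \<noteq> E" using assms(2) unfolding proper_flats_def by blast
  then have "biflat E indep (F, G)" "F \<noteq> E" using assms(1) unfolding biflag_def by auto
  then show "mflat E indep F" "F \<noteq> {}" "F \<subset> E"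
    using biflat_subset unfolding biflat_def by auto
qed

lemma mrank_proper_flats_mono:
  assumes "matroid E indep" "biflag E indep S"
    and "F \<in> proper_flats E S" "F' \<in> proper_flats E S" "F \<subset> F'"
  shows "mrank indep F < mrank indep F'"
  using assms proper_flat_props[OF assms(2)] by (intro mrank_flat_psubset) auto

lemma inj_on_mrank_proper_flats:
  assumes "matroid E indep" "biflag E indep S"
  shows "inj_on (mrank indep) (proper_flats E S)"
proof (rule inj_onI, rule ccontr)
  fix F F' assume FF': "F \<in> proper_flats E S" "F' \<in> proper_flats E S"
    and eq: "mrank indep F = mrank indep F'" and "F \<noteq> F'"
  then have "F \<subset> F' \<or> F' \<subset> F" using proper_flats_chain[OF assms(2)] by blast
  then show False
    using mrank_proper_flats_mono[OF assms] FF' eq by (metis less_irrefl)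
qed

lemma mrank_proper_flats_subset:
  assumes "matroid E indep" "no_loops E indep" "mrank indep E = r + 1" "biflag E indep S"
  shows "mrank indep ` proper_flats E S \<subseteq> {1..r}"
proof
  fix x assume "x \<in> mrank indep ` proper_flats E S"
  then obtain F where F: "F \<in> proper_flats E S" "x = mrank indep F" by blast
  note props = proper_flat_props[OF assms(4) F(1)]
  have "0 < x" using mrank_pos[OF assms(1,2)] props F(2) by auto
  moreover have "x < r + 1" using mrank_flat_psubset[OF assms(1) props(1,3)] F(2) assms(3) by simp
  ultimately show "x \<in> {1..r}" by simp
qed

lemma card_proper_flats_le:
  assumes "matroid E indep" "no_loops E indep" "mrank indep E = r + 1"
    and "finite E" "biflag E indep S"
  shows "card (proper_flats E S) \<le> r"
    and "card (proper_flats E S) = r \<Longrightarrow> initial E indep S"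
proof -
  have card_eq: "card (mrank indep ` proper_flats E S) = card (proper_flats E S)"
    using card_image[OF inj_on_mrank_proper_flats[OF assms(1,5)]] .
  note sub = mrank_proper_flats_subset[OF assms(1-3,5)]
  show "card (proper_flats E S) \<le> r"
    using card_mono[OF _ sub] card_eq by simp
  assume "card (proper_flats E S) = r"
  then show "initial E indep S"
    using card_subset_eq[OF _ sub] card_eq unfolding initial_def by simp
qed

lemma exists_not_in_proper_flats:
  assumes "finite E" "E \<noteq> {}" "biflag E indep S"
  obtains j where "j \<in> E" "j \<notin> \<Union>(proper_flats E S)"
proof -
  have "\<Union>(proper_flats E S) \<subset> E"
  proof (cases "proper_flats E S = {}")
    case False
    have "subset.chain UNIV (proper_flats E S)"
      unfolding subset.chain_def using proper_flats_chain[OF assms(3)] by blast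
    moreover have "finite (proper_flats E S)"
      using finite_proper_flats biflag_finite assms(1,3) by blast
    ultimately have "\<Union>(proper_flats E S) \<in> proper_flats E S"
      using Union_in_chain False by blast
    then show ?thesis using proper_flat_props(3)[OF assms(3)] by blast
  qed (use assms(2) in auto)
  then show ?thesis using that by blast
qed

text \<open>Since \<open>j\<close> lies in no proper flat of \<open>S\<close>, none of the variables of \<open>\<gamma>\<^sub>j\<close> divides \<open>x\<^sub>S\<close>.\<close>
lemma xmon_mult_gamma:
  assumes "finite E" "biflag E indep S" "j \<notin> \<Union>(proper_flats E S)"
  shows "xmon S * gamma E indep j
    = (\<Sum>b\<in>{(F, G). biflat E indep (F, G) \<and> j \<in> F \<and> F \<noteq> E}. xmon (insert b S))"
proof -
  have "b \<notin> S" if "b \<in> {(F, G). biflat E indep (F, G) \<and> j \<in> F \<and> F \<noteq> E}" for b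
    using that assms(3) unfolding proper_flats_def by auto
  then show ?thesis
    unfolding gamma_def xmon_def sum_distrib_left
    by (intro sum.cong) (auto simp: biflag_finite[OF assms(1,2)] mult.commute)
qed

lemma atLeastAtMost_remove_max:
  fixes a c :: nat
  assumes "insert a X = {1..Suc c}" "\<forall>x\<in>X. x < a"
  shows "X = {1..c}"
proof -
  have "Suc c \<in> insert a X" "a \<le> Suc c" using assms(1) by auto
  then have "a = Suc c" using assms(2) by fastforce
  moreover have "a \<notin> X" using assms(2) by blast
  ultimately have "X = {1..Suc c} - {Suc c}" using assms(1) by blast
  then show ?thesis by auto
qed

lemma biflag_insert_proper_flats:
  assumes M: "matroid E indep" and S: "finite E" "biflag E indep S"
    and S': "biflag E indep (insert (F, G) S)"
    and F: "j \<in> F" "F \<noteq> E" and j: "j \<notin> \<Union>(proper_flats E S)"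
  shows "card (proper_flats E (insert (F, G) S)) = Suc (card (proper_flats E S))"
    and "\<not> initial E indep S \<Longrightarrow> \<not> initial E indep (insert (F, G) S)"
proof -
  let ?P = "proper_flats E S" and ?P' = "proper_flats E (insert (F, G) S)"
  have P': "?P' = insert F ?P" using F(2) unfolding proper_flats_def by auto
  have "F \<notin> ?P" using F(1) j by blast
  then show card_P': "card ?P' = Suc (card ?P)"
    using P' finite_proper_flats[OF biflag_finite[OF S]] by simp
  have below: "mrank indep F' < mrank indep F" if "F' \<in> ?P" for F'
  proof -
    have "F' \<in> ?P'" "F \<in> ?P'" using P' that by auto
    moreover have "\<not> F \<subseteq> F'" using F(1) j that by blast
    ultimately have "F' \<subset> F" using proper_flats_chain[OF S'] \<open>F \<notin> ?P\<close> that by blast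
    then show ?thesis
      using mrank_proper_flats_mono[OF M S'] \<open>F' \<in> ?P'\<close> \<open>F \<in> ?P'\<close> by blast
  qed
  assume "\<not> initial E indep S"
  show "\<not> initial E indep (insert (F, G) S)"
  proof
    assume "initial E indep (insert (F, G) S)"
    then have "insert (mrank indep F) (mrank indep ` ?P) = {1..Suc (card ?P)}"
      unfolding initial_def card_P' unfolding P' by simp
    then have "mrank indep ` ?P = {1..card ?P}"
      using atLeastAtMost_remove_max below by blast
    with \<open>\<not> initial E indep S\<close> show False unfolding initial_def by simp
  qed
qed

lemma xmon_gamma_power_zero:
  assumes M: "matroid E indep" "no_loops E indep" "mrank indep E = r + 1"
    and E: "finite E" "E \<noteq> {}"
  shows "biflag E indep S \<Longrightarrow> i \<in> E \<Longrightarrow>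
    r < card (proper_flats E S) + k \<or> (card (proper_flats E S) + k = r \<and> \<not> initial E indep S)
    \<Longrightarrow> zero_in_chow E indep (xmon S * gamma E indep i ^ k)"
proof (induction k arbitrary: S)
  case 0
  then show ?case using card_proper_flats_le[OF M E(1)] by fastforce
next
  case (Suc k)
  let ?g = "gamma E indep"
  obtain j where j: "j \<in> E" "j \<notin> \<Union>(proper_flats E S)"
    using exists_not_in_proper_flats[OF E Suc.prems(1)] .
  define B where "B = {(F, G). biflat E indep (F, G) \<and> j \<in> F \<and> F \<noteq> E}"
  have extension_zero: "zero_in_chow E indep (xmon (insert b S) * ?g i ^ k)" if "b \<in> B" for b
  proof -
    obtain F G where b: "b = (F, G)" "biflat E indep (F, G)" "j \<in> F" "F \<noteq> E"
      using \<open>b \<in> B\<close> unfolding B_def by blast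
    show ?thesis
    proof (cases "biflag E indep (insert b S)")
      case True
      then show ?thesis
        using Suc biflag_insert_proper_flats[OF M(1) E(1) Suc.prems(1) _ b(3,4) j(2)] b(1)
        by fastforce
    next
      case False
      have "insert b S \<subseteq> biflats_of E indep"
        using Suc.prems(1) b unfolding biflag_def biflats_of_def by auto
      then show ?thesis using zero_in_chow_xmon_not_biflag[OF _ False] by (metis mult.commute)
    qed
  qed
  have "xmon S * ?g i ^ Suc k = ?g i ^ k * xmon S * (?g i - ?g j) + ?g i ^ k * (xmon S * ?g j)"
    by (simp add: algebra_simps)
  also have "\<dots> = ?g i ^ k * xmon S * (?g i - ?g j) + (\<Sum>b\<in>B. xmon (insert b S) * ?g i ^ k)"
    unfolding xmon_mult_gamma[OF E(1) Suc.prems(1) j(2)] B_def sum_distrib_left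
    by (simp add: mult.commute)
  finally show ?case
    using zero_in_chow_gamma_diff[OF Suc.prems(2) j(1)] extension_zero
      finite_subset[OF _ finite_biflats[OF E(1)], of B indep]
    unfolding zero_in_chow_def B_def
    by (auto intro!: ideal_gen_add ideal_gen_sum)
qed

theorem mainTheorem10:
  fixes n r k :: nat and indep :: "nat set \<Rightarrow> bool" and S :: "nat biflat set"
  defines "E \<equiv> {0..n}"
  assumes "matroid E indep"
    and "no_loops E indep" and "no_coloops E indep"
    and "mrank indep E = r + 1"
    and "biflag E indep S"
  shows "(card (proper_flats E S) + k > r \<longrightarrow>
            (\<forall>i\<in>E. zero_in_chow E indep (xmon S * gamma E indep i ^ k)))
       \<and> (card (proper_flats E S) + k = r \<and> \<not> initial E indep S \<longrightarrow>
            (\<forall>i\<in>E. zero_in_chow E indep (xmon S * gamma E indep i ^ k)))"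
proof -
  have "finite E" "E \<noteq> {}" unfolding E_def by auto
  then show ?thesis
    using xmon_gamma_power_zero[OF assms(2,3,5)] assms(6) by blast
qed

end
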